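(* Let $f:\mathbb{R}^n\to\mathbb{R}$ be continuously differentiable, let $s$ be an integer with $0<s<n$, and consider the problem (P): minimize $f(\mathbf{x})$ subject to $\|\mathbf{x}\|_0\le s$. If $\mathbf{x}^*\in C_s$ is a CW-minimum of (P), then $\mathbf{x}^*$ is a BF vector of (P).
   Context: $\|\mathbf{x}\|_0$ is the number of nonzero components of $\mathbf{x}$, $C_s=\{\mathbf{x}:\|\mathbf{x}\|_0\le s\}$, $I_1(\mathbf{x})=\{i:x_i\neq0\}$, $\mathbf{e}_i$ the $i$-th standard basis vector. A feasible $\mathbf{x}^*$ is a coordinate-wise (CW) minimum of (P) if either (Case I) $\|\mathbf{x}^*\|_0<s$ and $f(\mathbf{x}^* )=\min_{t\in\mathbb{R}}f(\mathbf{x}^*+t\mathbf{e}_i)$ for every $i$; or (Case II) $\|\mathbf{x}^*\|_0=s$ and $f(\mathbf{x}^* )\le\min_{t\in\mathbb{R}}f(\mathbf{x}^*-x_i^*\mathbf{e}_i+t\mathbf{e}_j)$ for every $i\in I_1(\mathbf{x}^* )$ and $j=1,\dots,n$. A vector $\mathbf{x}^*\in C_s$ is a basic feasible (BF) vector of (P) if: when $\|\mathbf{x}^*\|_0<s$, $\nabla f(\mathbf{x}^* )=0$; and when $\|\mathbf{x}^*\|_0=s$, $\nabla_i f(\mathbf{x}^* )=0$ for all $i\in I_1(\mathbf{x}^* )$. *)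

theory Defs
  imports "HOL-Analysis.Analysis"
begin

text \<open>Vectors in R^n are modelled as real^'n, n = CARD('n).\<close>

definition l0norm :: "real^'n \<Rightarrow> nat" where
  "l0norm x = card {i. x $ i \<noteq> 0}"

definition Cs :: "nat \<Rightarrow> (real^'n) set" where
  "Cs s = {x. l0norm x \<le> s}"

definition I1 :: "real^'n \<Rightarrow> 'n set" where
  "I1 x = {i. x $ i \<noteq> 0}"

definition e :: "'n \<Rightarrow> real^'n" where
  "e i = axis i 1"

text \<open>The minimum over t is read as "f x* is <= f(...) for every t" (the value at t = x*_i
  resp. the feasibility of x* makes this the same as equality with the min in Case I).\<close>
definition CW_minimum :: "(real^'n \<Rightarrow> real) \<Rightarrow> nat \<Rightarrow> real^'n \<Rightarrow> bool" where
  "CW_minimum f s x \<longleftrightarrow> x \<in> Cs s \<and>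
     ((l0norm x < s \<longrightarrow> (\<forall>i. \<forall>t. f x \<le> f (x + t *\<^sub>R e i))) \<and>
      (l0norm x = s \<longrightarrow> (\<forall>i\<in>I1 x. \<forall>j. \<forall>t. f x \<le> f (x - x $ i *\<^sub>R e i + t *\<^sub>R e j))))"

definition BF_vector :: "(real^'n \<Rightarrow> real^'n) \<Rightarrow> nat \<Rightarrow> real^'n \<Rightarrow> bool" where
  "BF_vector grad s x \<longleftrightarrow> x \<in> Cs s \<and>
     (l0norm x < s \<longrightarrow> grad x = 0) \<and>
     (l0norm x = s \<longrightarrow> (\<forall>i\<in>I1 x. grad x $ i = 0))"

end

theory Submission
  imports Defs
begin

text \<open>Both cases of a CW-minimum say that x* minimises f along certain coordinate lines through x*:
  in Case I along every line, in Case II along the line of every support coordinate i (take j = i and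
  t = x*_i). Fermat's rule on such a line makes the i-th partial derivative vanish, which is exactly
  the BF condition.\<close>

lemma partial_derivative_zero_at_coordinate_line_min:
  fixes f :: "real^'n \<Rightarrow> real"
  assumes deriv: "(f has_derivative (\<lambda>h. g \<bullet> h)) (at x)"
    and min: "\<And>t. f x \<le> f (x + t *\<^sub>R e i)"
  shows "g $ i = 0"
proof -
  have line: "((\<lambda>t. x + t *\<^sub>R e i) has_derivative (\<lambda>h. h *\<^sub>R e i)) (at 0)"
    by (auto intro!: derivative_eq_intros)
  have "((\<lambda>t. f (x + t *\<^sub>R e i)) has_derivative (\<lambda>h. g \<bullet> (h *\<^sub>R e i))) (at 0)"
    using has_derivative_compose[OF line, of f "\<lambda>h. g \<bullet> h"] deriv by (simp add: o_def)
  moreover have "(\<lambda>h. g \<bullet> (h *\<^sub>R e i)) = (*) (g $ i)"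
    by (auto simp: e_def inner_axis)
  ultimately have "((\<lambda>t. f (x + t *\<^sub>R e i)) has_real_derivative g $ i) (at 0)"
    by (simp add: has_field_derivative_def)
  from DERIV_local_min[OF this zero_less_one] min show ?thesis
    by simp
qed

lemma CW_minimum_coordinate_line_min:
  assumes "CW_minimum f s x" "l0norm x = s" "i \<in> I1 x"
  shows "f x \<le> f (x + t *\<^sub>R e i)"
proof -
  have "f x \<le> f (x - x $ i *\<^sub>R e i + (x $ i + t) *\<^sub>R e i)"
    using assms unfolding CW_minimum_def by blast
  then show ?thesis
    by (simp add: scaleR_add_left)
qed

theorem lemma2p5:
  fixes f :: "real^'n \<Rightarrow> real" and grad :: "real^'n \<Rightarrow> real^'n" and s :: nat
    and xs :: "real^'n"
  assumes deriv: "\<And>x. (f has_derivative (\<lambda>h. grad x \<bullet> h)) (at x)"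
    and cont: "continuous_on UNIV grad"
    and s_pos: "0 < s" and s_lt: "s < CARD('n)"
    and cw: "CW_minimum f s xs"
  shows "BF_vector grad s xs"
proof -
  note partial_zero = partial_derivative_zero_at_coordinate_line_min[OF deriv]
  have "grad xs = 0" if "l0norm xs < s"
    using cw that by (auto simp: CW_minimum_def vec_eq_iff intro: partial_zero)
  moreover have "grad xs $ i = 0" if "l0norm xs = s" "i \<in> I1 xs" for i
    using partial_zero CW_minimum_coordinate_line_min[OF cw that] by blast
  ultimately show ?thesis
    using cw by (simp add: BF_vector_def CW_minimum_def)
qed

end
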